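(* Let $m$ be an integer with $m \equiv 1 \pmod 4$ and $m \ge 5$, and let $n = 3^m - 1$. Then: (i) the ternary cyclic code $\mathcal{C}_{(0,3,m)}$ has length $n$ and dimension $(n+2)/2$, and the ternary cyclic code $\mathcal{C}_{(1,2,m)}$ has length $n$ and dimension $n/2$; (ii) the ternary cyclic code $\mathcal{C}_{(2,3,m)}$ has length $n$ and dimension $(n+2)/2$, and the ternary cyclic code $\mathcal{C}_{(0,1,m)}$ has length $n$ and dimension $n/2$.
   Context: Let $m \ge 2$ be an integer, $n = 3^m-1$, and let $\alpha$ be a primitive element of $\mathbb{F}_{3^m}$. For an integer $0 \le j \le n-1$ with $3$-adic expansion $j = \sum_{t=0}^{m-1} j_t 3^t$, $j_t \in \{0,1,2\}$, let $w_3(j) = \sum_{t=0}^{m-1} j_t$. For distinct $i_1, i_2 \in \{0,1,2,3\}$ let $T_{(i_1,i_2,m)} = \{1 \le j \le n-1 : w_3(j) \equiv i_1 \text{ or } i_2 \pmod 4\}$ and $g_{(i_1,i_2,m)}(x) = \prod_{j \in T_{(i_1,i_2,m)}} (x - \alpha^j) \in \mathbb{F}_3[x]$. $\mathcal{C}_{(i_1,i_2,m)}$ denotes the ternary cyclic code of length $n$ with generator polynomial $g_{(i_1,i_2,m)}(x)$, i.e. the ideal generated by $g_{(i_1,i_2,m)}(x)$ in $\mathbb{F}_3[x]/(x^n-1)$. *)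

theory Defs
  imports Main "HOL-Computational_Algebra.Polynomial"
begin

definition w3 :: "nat \<Rightarrow> nat \<Rightarrow> nat" where
  "w3 m j = (\<Sum>t<m. (j div 3 ^ t) mod 3)"

definition T_set :: "nat \<Rightarrow> nat \<Rightarrow> nat \<Rightarrow> nat set" where
  "T_set i1 i2 m = {j. 1 \<le> j \<and> j \<le> 3 ^ m - 2 \<and> (w3 m j mod 4 = i1 \<or> w3 m j mod 4 = i2)}"

definition primitive_elem :: "'a::field \<Rightarrow> bool" where
  "primitive_elem \<alpha> \<longleftrightarrow> \<alpha> \<noteq> 0 \<and> (\<forall>x. x \<noteq> 0 \<longrightarrow> (\<exists>k::nat. x = \<alpha> ^ k))"

definition ring_hom_fun :: "('f::field \<Rightarrow> 'a::field) \<Rightarrow> bool" where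
  "ring_hom_fun \<phi> \<longleftrightarrow> \<phi> 1 = 1 \<and> (\<forall>x y. \<phi> (x + y) = \<phi> x + \<phi> y \<and> \<phi> (x * y) = \<phi> x * \<phi> y)"

definition gen_poly_ext :: "'a::field \<Rightarrow> nat \<Rightarrow> nat \<Rightarrow> nat \<Rightarrow> 'a poly" where
  "gen_poly_ext \<alpha> i1 i2 m = (\<Prod>j\<in>T_set i1 i2 m. [:- (\<alpha> ^ j), 1:])"

text \<open>The generator polynomial as an element of F_3[x] (its coefficients lie in F_3,
  identified with a subfield of F_{3^m} via the embedding phi).\<close>
definition gen_poly :: "('f::field \<Rightarrow> 'a::field) \<Rightarrow> 'a \<Rightarrow> nat \<Rightarrow> nat \<Rightarrow> nat \<Rightarrow> 'f poly" where
  "gen_poly \<phi> \<alpha> i1 i2 m = (THE g. map_poly \<phi> g = gen_poly_ext \<alpha> i1 i2 m)"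

text \<open>Cyclic code of length n generated by g: the ideal (g) in F[x]/(x^n - 1),
  with residues represented by polynomials of degree < n.\<close>
definition cyclic_code :: "nat \<Rightarrow> 'f::field poly \<Rightarrow> 'f poly set" where
  "cyclic_code n g = {(g * h) mod (monom 1 n - 1) | h. True}"

definition code_dim :: "'f::field poly set \<Rightarrow> nat" where
  "code_dim C = vector_space.dim (smult :: 'f \<Rightarrow> 'f poly \<Rightarrow> 'f poly) C"

end

theory Submission
  imports Defs
begin

(* The generator polynomial of C_(i1,i2,m) is the product of the factors x - alpha^j with
   j in T = T_(i1,i2,m). Multiplication by 3 modulo n = 3^m - 1 rotates the ternary digits of j,
   so it preserves w_3 and permutes T; hence the Frobenius map x |-> x^3 fixes the product, whose
   coefficients therefore lie in F_3, and the code has dimension n - |T|.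
   To count T, note that the sum of i^(w_3(j)) over j < 3^m is (1 + i + i^2)^m = i^m (i the
   imaginary unit). For m = 1 (mod 4) this forces as many weights = 0 as = 2 (mod 4), and one
   more weight = 1 than = 3 (mod 4). The excluded endpoints j = 0 and j = n have weights 0 and
   2m = 2 (mod 4), so |T| = (n - 2)/2 for the pairs {0,3}, {2,3} and |T| = n/2 for {1,2}, {0,1}. *)


section \<open>Polynomials under field homomorphisms\<close>

lemma ring_hom_fun_0:
  assumes "ring_hom_fun \<phi>"
  shows "\<phi> 0 = 0"
proof -
  have "\<phi> 0 + \<phi> 0 = \<phi> 0 + 0"
    using assms unfolding ring_hom_fun_def by (metis add.right_neutral)
  then show ?thesis by (simp only: add_left_cancel)
qed

lemma ring_hom_fun_minus:
  assumes "ring_hom_fun \<phi>"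
  shows "\<phi> (- x) = - \<phi> x"
proof -
  have "\<phi> (- x) + \<phi> x = 0"
    using assms ring_hom_fun_0[OF assms] unfolding ring_hom_fun_def by (metis add.left_inverse)
  then show ?thesis by (simp add: eq_neg_iff_add_eq_0)
qed

lemma ring_hom_fun_inj:
  assumes "ring_hom_fun \<phi>"
  shows "inj \<phi>"
proof (rule injI)
  fix x y assume "\<phi> x = \<phi> y"
  then have "\<phi> (x - y) = 0"
    using assms ring_hom_fun_minus[OF assms] unfolding ring_hom_fun_def
    by (metis add.right_inverse diff_conv_add_uminus)
  moreover have "\<phi> (x - y) * \<phi> (inverse (x - y)) = 1" if "x \<noteq> y"
    using assms that unfolding ring_hom_fun_def by (metis right_inverse right_minus_eq)
  ultimately show "x = y" by force
qed

lemma map_poly_add_ring_hom: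
  assumes "ring_hom_fun \<phi>"
  shows "map_poly \<phi> (p + q) = map_poly \<phi> p + map_poly \<phi> q"
  using assms by (simp add: poly_eq_iff coeff_map_poly ring_hom_fun_0 ring_hom_fun_def)

lemma map_poly_mult_ring_hom:
  assumes "ring_hom_fun \<phi>"
  shows "map_poly \<phi> (p * q) = map_poly \<phi> p * map_poly \<phi> q"
proof -
  have "\<phi> (sum f A) = (\<Sum>x\<in>A. \<phi> (f x))" for f :: "nat \<Rightarrow> _" and A
    using sum_comp_morphism[of \<phi> f A] assms ring_hom_fun_0[OF assms]
    unfolding ring_hom_fun_def by (simp add: comp_def)
  with assms show ?thesis
    by (simp add: poly_eq_iff coeff_map_poly coeff_mult ring_hom_fun_0 ring_hom_fun_def)
qed

lemma map_poly_prod_ring_hom: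
  assumes "ring_hom_fun \<phi>"
  shows "map_poly \<phi> (\<Prod>x\<in>A. f x) = (\<Prod>x\<in>A. map_poly \<phi> (f x))"
  by (induction A rule: infinite_finite_induct)
    (use assms in \<open>simp_all add: map_poly_mult_ring_hom ring_hom_fun_def\<close>)

lemma degree_map_poly_ring_hom:
  assumes "ring_hom_fun \<phi>"
  shows "degree (map_poly \<phi> p) = degree p"
  using assms by (metis degree_map_poly injD ring_hom_fun_0 ring_hom_fun_inj)

lemma map_poly_eq_0_ring_hom:
  assumes "ring_hom_fun \<phi>"
  shows "map_poly \<phi> p = 0 \<longleftrightarrow> p = 0"
  using assms map_poly_eq_0_iff[of \<phi> p] ring_hom_fun_0[OF assms]
  by (metis injD ring_hom_fun_inj)

lemma map_poly_dvd_ring_hom_imp_dvd: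
  assumes hom: "ring_hom_fun \<phi>" and dvd: "map_poly \<phi> p dvd map_poly \<phi> q"
  shows "p dvd q"
proof (cases "p = 0")
  case True
  then show ?thesis using dvd map_poly_eq_0_ring_hom[OF hom] by simp
next
  case False
  have "map_poly \<phi> q = map_poly \<phi> (q div p) * map_poly \<phi> p + map_poly \<phi> (q mod p)"
    by (metis div_mult_mod_eq hom map_poly_add_ring_hom map_poly_mult_ring_hom)
  with dvd have "map_poly \<phi> p dvd map_poly \<phi> (q mod p)"
    by (metis dvd_add_right_iff dvd_triv_right)
  moreover have "q mod p = 0 \<or> degree (q mod p) < degree p"
    using degree_mod_less'[OF False] by blast
  ultimately have "q mod p = 0"
    using dvd_imp_degree_le degree_map_poly_ring_hom[OF hom] map_poly_eq_0_ring_hom[OF hom]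
    by (metis not_le)
  then show ?thesis by (simp add: mod_eq_0_iff_dvd)
qed

lemma map_poly_the_preimage:
  assumes hom: "ring_hom_fun \<phi>" and coeffs: "\<And>k. coeff P k \<in> range \<phi>"
  shows "map_poly \<phi> (THE g. map_poly \<phi> g = P) = P"
proof (rule theI)
  have inv0: "inv \<phi> 0 = 0"
    using inv_f_f[OF ring_hom_fun_inj[OF hom], of 0] ring_hom_fun_0[OF hom] by simp
  show "map_poly \<phi> (map_poly (inv \<phi>) P) = P"
    using coeffs by (intro poly_eqI) (simp add: coeff_map_poly inv0 ring_hom_fun_0[OF hom] f_inv_into_f)
  fix g assume "map_poly \<phi> g = P"
  then have "coeff P k = \<phi> (coeff g k)" for k
    by (auto simp: coeff_map_poly ring_hom_fun_0[OF hom])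
  then show "g = map_poly (inv \<phi>) P"
    by (simp add: poly_eq_iff coeff_map_poly inv0 inv_f_f[OF ring_hom_fun_inj[OF hom]])
qed

section \<open>Finite fields\<close>

lemma of_nat_card_UNIV_eq_0: "of_nat (card (UNIV :: 'a::{finite,ring_1} set)) = (0::'a)"
proof -
  have "(\<Sum>x\<in>(UNIV::'a set). x + 1) = (\<Sum>x\<in>UNIV. x)"
    by (rule sum.reindex_bij_witness[of _ "\<lambda>y. y - 1" "\<lambda>x. x + 1"]) auto
  then show ?thesis by (simp add: sum.distrib)
qed

lemma three_eq_0_if_card_power_3:
  assumes "card (UNIV :: 'a::{finite,field} set) = 3 ^ m" and "m > 0"
  shows "(3::'a) = 0"
  using of_nat_card_UNIV_eq_0[where 'a='a] assms by simp

lemma power_card_UNIV_minus_1: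
  fixes x :: "'a::{finite,field}"
  assumes "x \<noteq> 0"
  shows "x ^ (card (UNIV :: 'a set) - 1) = 1"
proof -
  define U where "U = (UNIV :: 'a set) - {0}"
  have "(\<Prod>y\<in>U. x * y) = (\<Prod>y\<in>U. y)"
    by (rule prod.reindex_bij_witness[of _ "\<lambda>y. y / x" "\<lambda>y. x * y"]) (use assms in \<open>auto simp: U_def\<close>)
  then have "x ^ card U * (\<Prod>y\<in>U. y) = (\<Prod>y\<in>U. y)" by (simp add: prod.distrib)
  moreover have "(\<Prod>y\<in>U. y) \<noteq> 0" by (simp add: U_def)
  moreover have "card U = card (UNIV :: 'a set) - 1" by (simp add: U_def card_Diff_singleton)
  ultimately show ?thesis by simp
qed

lemma primitive_elem_power_inj_on:
  fixes \<alpha> :: "'a::{finite,field}"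
  assumes "primitive_elem \<alpha>"
  shows "inj_on (\<lambda>k. \<alpha> ^ k) {..<card (UNIV :: 'a set) - 1}"
proof -
  define n where "n = card (UNIV :: 'a set) - 1"
  have \<alpha>0: "\<alpha> \<noteq> 0" using assms unfolding primitive_elem_def by simp
  have "card {0, 1::'a} \<le> card (UNIV :: 'a set)" by (rule card_mono) simp_all
  then have "n > 0" by (simp add: n_def)
  have \<alpha>n: "\<alpha> ^ n = 1" unfolding n_def by (rule power_card_UNIV_minus_1[OF \<alpha>0])
  have "UNIV - {0} \<subseteq> (\<lambda>k. \<alpha> ^ k) ` {..<n}"
  proof
    fix x :: 'a assume "x \<in> UNIV - {0}"
    then obtain k where k: "x = \<alpha> ^ k" using assms unfolding primitive_elem_def by auto
    have "\<alpha> ^ k = (\<alpha> ^ n) ^ (k div n) * \<alpha> ^ (k mod n)"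
      by (metis mult_div_mod_eq power_add power_mult)
    also have "\<dots> = \<alpha> ^ (k mod n)" by (simp add: \<alpha>n)
    finally show "x \<in> (\<lambda>k. \<alpha> ^ k) ` {..<n}"
      using k \<open>n > 0\<close> by simp
  qed
  then have "card (UNIV - {0::'a}) \<le> card ((\<lambda>k. \<alpha> ^ k) ` {..<n})"
    by (intro card_mono) simp_all
  then have "card {..<n} \<le> card ((\<lambda>k. \<alpha> ^ k) ` {..<n})"
    by (simp add: card_Diff_singleton n_def)
  then show ?thesis
    unfolding n_def[symmetric]
    using card_image_le[of "{..<n}" "\<lambda>k. \<alpha> ^ k"] by (intro eq_card_imp_inj_on) simp_all
qed

lemma ring_hom_fun_cube:
  assumes "(3::'a::field) = 0"
  shows "ring_hom_fun (\<lambda>x::'a. x ^ 3)"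
proof -
  have "(x + y) ^ 3 = x ^ 3 + y ^ 3 + 3 * (x * x * y + x * y * y)" for x y :: 'a
    by (simp add: power3_eq_cube algebra_simps)
  then show ?thesis
    using assms unfolding ring_hom_fun_def by (simp add: power_mult_distrib)
qed

lemma cube_eq_self_cases:
  fixes c :: "'a::field"
  assumes "c ^ 3 = c"
  shows "c = 0 \<or> c = 1 \<or> c = -1"
proof -
  have "c * (c - 1) * (c + 1) = 0" using assms by (simp add: power3_eq_cube algebra_simps)
  then show ?thesis by (auto simp: eq_neg_iff_add_eq_0)
qed

lemma prod_linear_factors_dvd:
  fixes p :: "'a::field poly"
  assumes "finite S" and "\<And>a. a \<in> S \<Longrightarrow> poly p a = 0"
  shows "(\<Prod>a\<in>S. [:-a, 1:]) dvd p"
  using assms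
proof (induction S arbitrary: p rule: finite_induct)
  case (insert a S)
  have "[:-a, 1:] dvd p" using insert.prems by (simp add: poly_eq_0_iff_dvd)
  then obtain q where q: "p = [:-a, 1:] * q" by (elim dvdE)
  have "poly q b = 0" if "b \<in> S" for b
    using insert that q by (auto simp: poly_mult)
  then have "(\<Prod>a\<in>S. [:-a, 1:]) dvd q" by (rule insert.IH)
  then have "[:-a, 1:] * (\<Prod>a\<in>S. [:-a, 1:]) dvd p"
    unfolding q by (rule mult_dvd_mono[OF dvd_refl])
  then show ?case by (simp only: prod.insert[OF insert.hyps])
qed simp

section \<open>Dimension of a cyclic code\<close>

interpretation poly_vs: vector_space "smult :: 'a::field \<Rightarrow> 'a poly \<Rightarrow> 'a poly"
  by unfold_locales (simp_all add: smult_add_right smult_add_left)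

lemma degree_monom_minus_1:
  assumes "n > 0"
  shows "degree (monom (1::'a::field) n - 1) = n"
proof -
  have "degree (monom (1::'a) n + (- 1)) = degree (monom (1::'a) n)"
    using assms by (intro degree_add_eq_left) (simp add: degree_monom_eq)
  then show ?thesis by (simp add: degree_monom_eq)
qed

lemma mem_cyclic_code_iff:
  fixes g :: "'a::field poly"
  assumes "n > 0" and "g dvd monom 1 n - 1"
  shows "c \<in> cyclic_code n g \<longleftrightarrow> g dvd c \<and> degree c < n"
proof -
  define X :: "'a poly" where "X = monom 1 n - 1"
  have dX: "degree X = n"
    unfolding X_def by (rule degree_monom_minus_1[OF assms(1)])
  then have X0: "X \<noteq> 0" using assms(1) by auto
  show ?thesis
  proof
    assume "c \<in> cyclic_code n g"
    then obtain h where c: "c = (g * h) mod X" by (auto simp: cyclic_code_def X_def)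
    then show "g dvd c \<and> degree c < n"
      using assms(2) degree_mod_less[OF X0, of "g * h"] dX assms(1)
      by (auto simp: X_def intro: dvd_mod)
  next
    assume "g dvd c \<and> degree c < n"
    then obtain h where "c = g * h" and "degree c < n" by (auto elim: dvdE)
    then have "c = (g * h) mod X" using dX by (simp add: mod_poly_less)
    then show "c \<in> cyclic_code n g" by (auto simp: cyclic_code_def X_def)
  qed
qed

lemma inj_shifted_multiples:
  fixes g :: "'a::field poly"
  assumes "g \<noteq> 0"
  shows "inj (\<lambda>k. g * monom 1 k)"
  using assms by (intro injI) (metis degree_monom_eq mult_left_cancel one_neq_zero)

lemma independent_shifted_multiples:
  fixes g :: "'a::field poly"
  assumes "g \<noteq> 0"
  shows "poly_vs.independent ((\<lambda>k. g * monom 1 k) ` {..<d})"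
proof (rule poly_vs.independent_if_scalars_zero)
  show "finite ((\<lambda>k. g * monom 1 k) ` {..<d})" by simp
next
  fix f x
  assume sum0: "(\<Sum>x\<in>(\<lambda>k. g * monom 1 k) ` {..<d}. smult (f x) x) = 0"
    and x: "x \<in> (\<lambda>k. g * monom 1 k) ` {..<d}"
  have "(\<Sum>x\<in>(\<lambda>k. g * monom 1 k) ` {..<d}. smult (f x) x)
      = g * (\<Sum>k<d. monom (f (g * monom 1 k)) k)"
    using inj_shifted_multiples[OF assms]
    by (simp add: sum.reindex inj_on_subset sum_distrib_left smult_monom flip: mult_smult_right)
  with sum0 assms have "(\<Sum>k<d. monom (f (g * monom 1 k)) k) = 0" by simp
  moreover obtain k where "k < d" and "x = g * monom 1 k" using x by blast
  ultimately show "f x = 0"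
    using coeff_sum[of "\<lambda>k. monom (f (g * monom 1 k)) k" "{..<d}" k] by simp
qed

lemma span_shifted_multiples:
  fixes g :: "'a::field poly"
  assumes "g \<noteq> 0" and "g dvd c" and "degree c < n"
  shows "c \<in> poly_vs.span ((\<lambda>k. g * monom 1 k) ` {..<n - degree g})"
proof -
  obtain h where c: "c = g * h" using assms(2) by (elim dvdE)
  have "coeff h k = 0" if "k \<ge> n - degree g" for k
  proof (cases "h = 0")
    case False
    then have "degree h < k" using assms c that by (simp add: degree_mult_eq)
    then show ?thesis by (rule coeff_eq_0)
  qed simp
  then have "h = (\<Sum>k<n - degree g. monom (coeff h k) k)"
    by (intro poly_eqI) (auto simp: coeff_sum not_less)
  then have "c = g * (\<Sum>k<n - degree g. monom (coeff h k) k)"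
    using c by metis
  also have "\<dots> = (\<Sum>k<n - degree g. smult (coeff h k) (g * monom 1 k))"
    by (simp add: sum_distrib_left smult_monom flip: mult_smult_right)
  also have "\<dots> \<in> poly_vs.span ((\<lambda>k. g * monom 1 k) ` {..<n - degree g})"
    by (intro poly_vs.span_sum poly_vs.span_scale poly_vs.span_base) auto
  finally show ?thesis .
qed

lemma dim_multiples_degree_less:
  fixes g :: "'a::field poly"
  assumes "g \<noteq> 0" and "degree g \<le> n"
  shows "poly_vs.dim {c. g dvd c \<and> degree c < n} = n - degree g"
proof -
  define B where "B = (\<lambda>k. g * monom 1 k) ` {..<n - degree g}"
  have "B \<subseteq> {c. g dvd c \<and> degree c < n}"
    using assms by (auto simp: B_def degree_mult_eq degree_monom_eq)
  moreover have "{c. g dvd c \<and> degree c < n} \<subseteq> poly_vs.span B"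
    using span_shifted_multiples[OF assms(1)] by (auto simp: B_def)
  moreover have "card B = n - degree g"
    unfolding B_def using inj_shifted_multiples[OF assms(1)] by (simp add: card_image inj_on_subset)
  ultimately show ?thesis
    using poly_vs.basis_card_eq_dim independent_shifted_multiples[OF assms(1)] B_def by metis
qed

lemma cyclic_code_length_dim:
  fixes g :: "'a::field poly"
  assumes "n > 0" and "g \<noteq> 0" and "g dvd monom 1 n - 1"
  shows "(\<forall>c\<in>cyclic_code n g. degree c < n) \<and> code_dim (cyclic_code n g) = n - degree g"
proof -
  have "degree (monom 1 n - 1 :: 'a poly) = n"
    by (rule degree_monom_minus_1[OF assms(1)])
  then have "degree g \<le> n"
    using dvd_imp_degree_le[OF assms(3)] assms(1) by (metis degree_0 less_irrefl)
  moreover have "cyclic_code n g = {c. g dvd c \<and> degree c < n}"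
    using mem_cyclic_code_iff[OF assms(1,3)] by blast
  ultimately show ?thesis
    using dim_multiples_degree_less[OF assms(2)] by (simp add: code_dim_def)
qed

section \<open>Ternary weights modulo 4\<close>

lemma w3_Suc: "w3 (Suc m) j = j mod 3 + w3 m (j div 3)"
  unfolding w3_def sum.lessThan_Suc_shift by (simp add: div_mult2_eq)

lemma w3_mult_3_add:
  assumes "d < 3"
  shows "w3 (Suc m) (3 * k + d) = w3 m k + d"
  using assms by (simp add: w3_Suc)

lemma digit_of_mod_power:
  assumes "t < m"
  shows "(j mod 3 ^ m) div 3 ^ t mod 3 = j div 3 ^ t mod (3::nat)"
proof -
  have "(3::nat) ^ m = 3 ^ t * 3 ^ (m - t)" using assms by (simp flip: power_add)
  then have "(j mod 3 ^ m) div 3 ^ t = j div 3 ^ t mod 3 ^ (m - t)"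
    by (simp add: mod_mult2_eq)
  moreover have "(3::nat) dvd 3 ^ (m - t)" using assms by simp
  ultimately show ?thesis by (simp add: mod_mod_cancel)
qed

lemma w3_Suc_top_digit: "w3 (Suc m) j = w3 m (j mod 3 ^ m) + j div 3 ^ m mod 3"
  unfolding w3_def sum.lessThan_Suc by (simp add: digit_of_mod_power)

lemma w3_3_power_minus_1: "w3 m (3 ^ m - 1) = 2 * m"
proof (induction m)
  case (Suc m)
  have "(3::nat) ^ Suc m - 1 = 3 * (3 ^ m - 1) + 2"
    using one_le_power[of "3::nat" m] by (simp only: power_Suc) arith
  then show ?case using Suc w3_mult_3_add[of 2 m "3 ^ m - 1"] by simp
qed (simp add: w3_def)

lemma sum_lessThan_3_mult:
  fixes G :: "nat \<Rightarrow> 'b::comm_monoid_add"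
  shows "(\<Sum>j<3 * N. G j) = (\<Sum>k<N. G (3 * k) + G (3 * k + 1) + G (3 * k + 2))"
proof (induction N)
  case (Suc N)
  have "3 * Suc N = Suc (Suc (Suc (3 * N)))" by simp
  then show ?case unfolding \<open>3 * Suc N = _\<close> using Suc.IH by (simp add: ac_simps)
qed simp

lemma sum_w3_Suc:
  fixes F :: "nat \<Rightarrow> 'b::comm_monoid_add"
  shows "(\<Sum>j<3 ^ Suc m. F (w3 (Suc m) j)) = (\<Sum>k<3 ^ m. F (w3 m k) + F (w3 m k + 1) + F (w3 m k + 2))"
  using w3_mult_3_add[of 0 m] w3_mult_3_add[of 1 m] w3_mult_3_add[of 2 m]
  by (simp only: power_Suc sum_lessThan_3_mult) simp

text \<open>Each ternary digit contributes the factor \<open>1 + \<i> + \<i>\<^sup>2 = \<i>\<close>.\<close>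
lemma sum_imag_unit_power_w3: "(\<Sum>j<3 ^ m. \<i> ^ w3 m j) = \<i> ^ m"
proof (induction m)
  case (Suc m)
  have step: "\<i> ^ w + \<i> ^ (w + 1) + \<i> ^ (w + 2) = \<i> * \<i> ^ w" for w
    by (simp add: power_add)
  have "(\<Sum>j<3 ^ Suc m. \<i> ^ w3 (Suc m) j) = (\<Sum>k<3 ^ m. \<i> * \<i> ^ w3 m k)"
    by (rule sum_w3_Suc[of "\<lambda>w. \<i> ^ w" m, unfolded step])
  then show ?case using Suc.IH by (simp add: sum_distrib_left[symmetric])
qed (simp add: w3_def)

definition weight_count :: "nat \<Rightarrow> nat \<Rightarrow> nat" where
  "weight_count m r = card {j. j < 3 ^ m \<and> w3 m j mod 4 = r}"

lemma sum_by_weight_residue: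
  fixes f :: "nat \<Rightarrow> 'b::comm_semiring_1"
  shows "(\<Sum>j<3 ^ m. f (w3 m j mod 4)) = (\<Sum>r<4. of_nat (weight_count m r) * f r)"
proof -
  have "(\<Sum>j<3 ^ m. f (w3 m j mod 4)) = (\<Sum>r<4. \<Sum>j\<in>{j \<in> {..<3 ^ m}. w3 m j mod 4 = r}. f (w3 m j mod 4))"
    by (rule sum.group[symmetric]) auto
  also have "\<dots> = (\<Sum>r<4. of_nat (weight_count m r) * f r)"
    unfolding weight_count_def by (intro sum.cong refl) auto
  finally show ?thesis .
qed

lemma imag_unit_power_mod_4: "\<i> ^ (w mod 4) = \<i> ^ w"
proof -
  have "\<i> ^ w = (\<i> ^ 4) ^ (w div 4) * \<i> ^ (w mod 4)"
    by (metis mult_div_mod_eq power_add power_mult)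
  then show ?thesis by (simp add: power4_eq_xxxx)
qed

lemma weight_count_mod_4_eq_1:
  assumes "m mod 4 = 1"
  shows "weight_count m 0 = weight_count m 2" and "weight_count m 1 = weight_count m 3 + 1"
    and "2 * weight_count m 2 + 2 * weight_count m 3 + 1 = 3 ^ m"
proof -
  have "(\<Sum>r<4. of_nat (weight_count m r) * \<i> ^ r) = \<i> ^ m"
    using sum_by_weight_residue[of "\<lambda>r. \<i> ^ r" m]
    by (simp add: imag_unit_power_mod_4 sum_imag_unit_power_w3)
  also have "\<i> ^ m = \<i>"
    using imag_unit_power_mod_4[of m] assms by simp
  finally have "of_nat (weight_count m 0) - of_nat (weight_count m 2)
      + \<i> * (of_nat (weight_count m 1) - of_nat (weight_count m 3)) = \<i>"
    by (simp add: eval_nat_numeral algebra_simps)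
  then have "real (weight_count m 0) = real (weight_count m 2)"
    and "real (weight_count m 1) = real (weight_count m 3) + 1"
    by (simp_all add: complex_eq_iff)
  then show "weight_count m 0 = weight_count m 2" and "weight_count m 1 = weight_count m 3 + 1"
    by linarith+
  moreover have "(\<Sum>r<4. weight_count m r) = 3 ^ m"
    using sum_by_weight_residue[of "\<lambda>_. 1 :: nat" m] by simp
  ultimately show "2 * weight_count m 2 + 2 * weight_count m 3 + 1 = 3 ^ m"
    by (simp add: eval_nat_numeral)
qed

lemma finite_T_set: "finite (T_set i1 i2 m)"
  by (rule finite_subset[of _ "{..<3 ^ m}"]) (auto simp: T_set_def)

lemma card_T_set:
  assumes "odd m" and "i1 \<noteq> i2"
  shows "card (T_set i1 i2 m) + of_bool (i1 = 0 \<or> i2 = 0) + of_bool (i1 = 2 \<or> i2 = 2)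
    = weight_count m i1 + weight_count m i2"
proof -
  define S where "S = {j. j < 3 ^ m \<and> (w3 m j mod 4 = i1 \<or> w3 m j mod 4 = i2)}"
  define top where "top = (3::nat) ^ m - 1"
  have "card S = weight_count m i1 + weight_count m i2"
  proof -
    have "S = {j. j < 3 ^ m \<and> w3 m j mod 4 = i1} \<union> {j. j < 3 ^ m \<and> w3 m j mod 4 = i2}"
      by (auto simp: S_def)
    then show ?thesis
      unfolding weight_count_def using assms(2) by (simp add: card_Un_disjoint disjoint_iff)
  qed
  moreover have "card S = card (T_set i1 i2 m) + card (S \<inter> {0, top})"
  proof -
    have "S = T_set i1 i2 m \<union> (S \<inter> {0, top})" and "T_set i1 i2 m \<inter> (S \<inter> {0, top}) = {}"
      by (auto simp: S_def T_set_def top_def)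
    then show ?thesis
      using finite_T_set by (metis card_Un_disjoint finite.emptyI finite.insertI finite_Int)
  qed
  moreover have "card (S \<inter> {0, top}) = of_bool (i1 = 0 \<or> i2 = 0) + of_bool (i1 = 2 \<or> i2 = 2)"
  proof -
    have "top \<noteq> 0" and "top < 3 ^ m"
      using one_less_power[of "3::nat" m] odd_pos[OF assms(1)] by (auto simp: top_def)
    moreover have "2 * m mod 4 = 2"
      using assms(1) by presburger
    moreover have "w3 m top = 2 * m" unfolding top_def by (rule w3_3_power_minus_1)
    ultimately have "0 \<in> S \<longleftrightarrow> i1 = 0 \<or> i2 = 0" and "top \<in> S \<longleftrightarrow> i1 = 2 \<or> i2 = 2"
      by (auto simp: S_def w3_def)
    with \<open>top \<noteq> 0\<close> show ?thesis
      by (cases "0 \<in> S"; cases "top \<in> S") (simp_all add: Int_insert_right)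
  qed
  ultimately show ?thesis by simp
qed

section \<open>Cyclotomic cosets\<close>

text \<open>Cyclic rotation of the \<open>m\<close>-digit ternary expansion, i.e. multiplication by 3
  modulo \<open>3\<^sup>m - 1\<close>.\<close>
definition rotate_digits :: "nat \<Rightarrow> nat \<Rightarrow> nat" where
  "rotate_digits m j = 3 * (j mod 3 ^ (m - 1)) + j div 3 ^ (m - 1)"

lemma three_mult_eq_rotate_digits:
  "3 * j = (3 ^ Suc m - 1) * (j div 3 ^ m) + rotate_digits (Suc m) j"
proof -
  define q r where "q = j div 3 ^ m" and "r = j mod 3 ^ m"
  obtain N where N: "(3::nat) ^ Suc m = Suc N" using not0_implies_Suc by fastforce
  have "j = 3 ^ m * q + r" by (simp add: q_def r_def)
  then have "3 * j = 3 ^ Suc m * q + 3 * r" by simp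
  moreover have "3 ^ Suc m * q = (3 ^ Suc m - 1) * q + q" by (simp only: N) simp
  ultimately show ?thesis by (simp add: rotate_digits_def flip: q_def r_def)
qed

lemma top_digit_less_3:
  assumes "j < 3 ^ Suc m"
  shows "j div 3 ^ m < (3::nat)"
  using assms by (simp add: div_less_iff_less_mult mult.commute)

lemma w3_rotate_digits:
  assumes "j < 3 ^ Suc m"
  shows "w3 (Suc m) (rotate_digits (Suc m) j) = w3 (Suc m) j"
  using w3_mult_3_add[OF top_digit_less_3[OF assms], of m "j mod 3 ^ m"]
  by (simp add: rotate_digits_def w3_Suc_top_digit top_digit_less_3[OF assms])

lemma inj_on_rotate_digits: "inj_on (rotate_digits (Suc m)) {..<3 ^ Suc m}"
proof (rule inj_onI)
  fix x y assume "x \<in> {..<3 ^ Suc m}" "y \<in> {..<3 ^ Suc m}"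
    and eq: "rotate_digits (Suc m) x = rotate_digits (Suc m) y"
  then have "x div 3 ^ m < 3" "y div 3 ^ m < 3" by (simp_all add: top_digit_less_3)
  then have "x div 3 ^ m = y div 3 ^ m" and "x mod 3 ^ m = y mod 3 ^ m"
    using arg_cong[OF eq, of "\<lambda>r. r mod 3"] arg_cong[OF eq, of "\<lambda>r. r div 3"]
    by (simp_all add: rotate_digits_def)
  then show "x = y" by (metis div_mult_mod_eq)
qed

lemma rotate_digits_bounds:
  assumes "1 \<le> j" and "j \<le> 3 ^ Suc m - 2"
  shows "1 \<le> rotate_digits (Suc m) j" and "rotate_digits (Suc m) j \<le> 3 ^ Suc m - 2"
proof -
  define q r where "q = j div 3 ^ m" and "r = j mod 3 ^ m"
  have j: "j = 3 ^ m * q + r" and "r < 3 ^ m" and "q < 3"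
    using assms top_digit_less_3[of j m] by (simp_all add: q_def r_def)
  have rot: "rotate_digits (Suc m) j = 3 * r + q"
    by (simp add: rotate_digits_def q_def r_def)
  show "1 \<le> rotate_digits (Suc m) j"
    using assms(1) j rot by (cases "q = 0 \<and> r = 0") auto
  show "rotate_digits (Suc m) j \<le> 3 ^ Suc m - 2"
  proof (rule ccontr)
    assume "\<not> ?thesis"
    then have "q = 2" and "r = 3 ^ m - 1" using rot \<open>r < 3 ^ m\<close> \<open>q < 3\<close> by auto
    then have "j = 3 ^ Suc m - 1" using j by (simp add: algebra_simps)
    then show False using assms(2) one_less_power[of "3::nat" "Suc m"] by linarith
  qed
qed

lemma rotate_digits_T_set: "rotate_digits (Suc m) ` T_set i1 i2 (Suc m) = T_set i1 i2 (Suc m)"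
proof (rule endo_inj_surj)
  show "finite (T_set i1 i2 (Suc m))" by (rule finite_T_set)
  have sub: "T_set i1 i2 (Suc m) \<subseteq> {..<3 ^ Suc m}"
    by (auto simp: T_set_def)
  show "inj_on (rotate_digits (Suc m)) (T_set i1 i2 (Suc m))"
    using inj_on_rotate_digits sub by (rule inj_on_subset)
  show "rotate_digits (Suc m) ` T_set i1 i2 (Suc m) \<subseteq> T_set i1 i2 (Suc m)"
    using sub rotate_digits_bounds w3_rotate_digits by (fastforce simp: T_set_def)
qed

section \<open>The generator polynomials\<close>

lemma degree_gen_poly_ext: "degree (gen_poly_ext \<alpha> i1 i2 m) = card (T_set i1 i2 m)"
  unfolding gen_poly_ext_def by (subst degree_prod_sum_eq) (auto simp: finite_T_set)

lemma gen_poly_ext_dvd: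
  fixes \<alpha> :: "'a::{finite,field}"
  assumes "card (UNIV :: 'a set) = 3 ^ m" and "primitive_elem \<alpha>"
  shows "gen_poly_ext \<alpha> i1 i2 m dvd monom 1 (3 ^ m - 1) - 1"
proof -
  have T: "T_set i1 i2 m \<subseteq> {..<3 ^ m - 1}" by (auto simp: T_set_def)
  have "gen_poly_ext \<alpha> i1 i2 m = (\<Prod>a\<in>(\<lambda>j. \<alpha> ^ j) ` T_set i1 i2 m. [:-a, 1:])"
    using primitive_elem_power_inj_on[OF assms(2)] T assms(1)
    by (simp add: gen_poly_ext_def prod.reindex inj_on_subset)
  also have "\<dots> dvd monom 1 (3 ^ m - 1) - 1"
  proof (rule prod_linear_factors_dvd)
    have "\<alpha> \<noteq> 0" using assms(2) by (simp add: primitive_elem_def)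
    then have "(\<alpha> ^ j) ^ (3 ^ m - 1) = 1" for j
      using power_card_UNIV_minus_1[of "\<alpha> ^ j"] assms(1) by simp
    then show "poly (monom 1 (3 ^ m - 1) - 1) a = 0" if "a \<in> (\<lambda>j. \<alpha> ^ j) ` T_set i1 i2 m" for a
      using that by (auto simp: poly_monom)
  qed (use T in \<open>auto intro: finite_subset\<close>)
  finally show ?thesis .
qed

lemma gen_poly_ext_frobenius:
  fixes \<alpha> :: "'a::{finite,field}"
  assumes card: "card (UNIV :: 'a set) = 3 ^ Suc m" and "\<alpha> \<noteq> 0"
  shows "map_poly (\<lambda>x. x ^ 3) (gen_poly_ext \<alpha> i1 i2 (Suc m)) = gen_poly_ext \<alpha> i1 i2 (Suc m)"
proof -
  define T where "T = T_set i1 i2 (Suc m)"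
  have hom: "ring_hom_fun (\<lambda>x::'a. x ^ 3)"
    using three_eq_0_if_card_power_3[OF card] by (simp add: ring_hom_fun_cube)
  have "\<alpha> ^ (3 ^ Suc m - 1) = 1"
    using power_card_UNIV_minus_1[OF assms(2)] card by simp
  have "(\<alpha> ^ j) ^ 3 = \<alpha> ^ rotate_digits (Suc m) j" for j
  proof -
    have "(\<alpha> ^ j) ^ 3 = \<alpha> ^ (3 * j)" by (metis power_mult mult.commute)
    also have "\<dots> = (\<alpha> ^ (3 ^ Suc m - 1)) ^ (j div 3 ^ m) * \<alpha> ^ rotate_digits (Suc m) j"
      by (subst three_mult_eq_rotate_digits) (simp only: power_add power_mult)
    finally show ?thesis using \<open>\<alpha> ^ (3 ^ Suc m - 1) = 1\<close> by simp
  qed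
  then have "map_poly (\<lambda>x. x ^ 3) (gen_poly_ext \<alpha> i1 i2 (Suc m))
      = (\<Prod>j\<in>T. [:- (\<alpha> ^ rotate_digits (Suc m) j), 1:])"
    using hom by (simp add: gen_poly_ext_def map_poly_prod_ring_hom map_poly_pCons T_def)
  also have "\<dots> = (\<Prod>j\<in>rotate_digits (Suc m) ` T. [:- (\<alpha> ^ j), 1:])"
  proof -
    have "T \<subseteq> {..<3 ^ Suc m}" by (auto simp: T_def T_set_def)
    then have "inj_on (rotate_digits (Suc m)) T" by (rule inj_on_subset[OF inj_on_rotate_digits])
    then show ?thesis by (simp add: prod.reindex)
  qed
  also have "\<dots> = gen_poly_ext \<alpha> i1 i2 (Suc m)"
    by (simp add: rotate_digits_T_set gen_poly_ext_def T_def)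
  finally show ?thesis .
qed

lemma coeff_gen_poly_ext:
  fixes \<alpha> :: "'a::{finite,field}"
  assumes "card (UNIV :: 'a set) = 3 ^ m" and "m > 0" and "\<alpha> \<noteq> 0"
  shows "coeff (gen_poly_ext \<alpha> i1 i2 m) k \<in> {0, 1, -1}"
proof -
  obtain m' where m: "m = Suc m'" using assms(2) by (cases m) auto
  have "coeff (gen_poly_ext \<alpha> i1 i2 m) k ^ 3 = coeff (gen_poly_ext \<alpha> i1 i2 m) k"
    using arg_cong[OF gen_poly_ext_frobenius[OF assms(1)[unfolded m] assms(3)], of "\<lambda>p. coeff p k"]
    by (simp add: coeff_map_poly m)
  then show ?thesis using cube_eq_self_cases by blast
qed

lemma gen_poly_properties:
  fixes \<alpha> :: "'a::{finite,field}" and \<phi> :: "'f::field \<Rightarrow> 'a"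
  assumes card: "card (UNIV :: 'a set) = 3 ^ m" and "m > 0"
    and hom: "ring_hom_fun \<phi>" and prim: "primitive_elem \<alpha>"
  shows "gen_poly \<phi> \<alpha> i1 i2 m \<noteq> 0"
    and "degree (gen_poly \<phi> \<alpha> i1 i2 m) = card (T_set i1 i2 m)"
    and "gen_poly \<phi> \<alpha> i1 i2 m dvd monom 1 (3 ^ m - 1) - 1"
proof -
  have "coeff (gen_poly_ext \<alpha> i1 i2 m) k \<in> range \<phi>" for k
    using coeff_gen_poly_ext[OF card assms(2), of \<alpha> i1 i2 k] prim hom
    by (auto simp: primitive_elem_def ring_hom_fun_0 ring_hom_fun_minus ring_hom_fun_def
        intro: range_eqI[of _ _ 0] range_eqI[of _ _ 1] range_eqI[of _ _ "-1"])
  then have map: "map_poly \<phi> (gen_poly \<phi> \<alpha> i1 i2 m) = gen_poly_ext \<alpha> i1 i2 m"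
    unfolding gen_poly_def by (rule map_poly_the_preimage[OF hom])
  show "gen_poly \<phi> \<alpha> i1 i2 m \<noteq> 0"
    using map map_poly_eq_0_ring_hom[OF hom] finite_T_set by (auto simp: gen_poly_ext_def)
  show "degree (gen_poly \<phi> \<alpha> i1 i2 m) = card (T_set i1 i2 m)"
    using map degree_map_poly_ring_hom[OF hom] degree_gen_poly_ext by metis
  have "map_poly \<phi> (monom 1 (3 ^ m - 1) - 1) = monom 1 (3 ^ m - 1) - 1"
    using hom by (simp add: poly_eq_iff coeff_map_poly ring_hom_fun_0 ring_hom_fun_minus
        ring_hom_fun_def coeff_monom)
  then show "gen_poly \<phi> \<alpha> i1 i2 m dvd monom 1 (3 ^ m - 1) - 1"
    using gen_poly_ext_dvd[OF card prim] map map_poly_dvd_ring_hom_imp_dvd[OF hom] by metis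
qed

lemma cyclic_code_gen_poly:
  fixes \<alpha> :: "'a::{finite,field}" and \<phi> :: "'f::field \<Rightarrow> 'a"
  assumes "card (UNIV :: 'a set) = 3 ^ m" and "m > 0"
    and "ring_hom_fun \<phi>" and "primitive_elem \<alpha>"
  shows "(\<forall>c\<in>cyclic_code (3 ^ m - 1) (gen_poly \<phi> \<alpha> i1 i2 m). degree c < 3 ^ m - 1) \<and>
    code_dim (cyclic_code (3 ^ m - 1) (gen_poly \<phi> \<alpha> i1 i2 m)) = 3 ^ m - 1 - card (T_set i1 i2 m)"
proof -
  have "3 ^ m - 1 > (0::nat)" using one_less_power[OF _ assms(2), of "3::nat"] by simp
  then show ?thesis
    using cyclic_code_length_dim gen_poly_properties[OF assms] by metis
qed

theorem theorem2:
  fixes m :: nat and \<alpha> :: "'a::{finite,field}" and \<phi> :: "'f::{finite,field} \<Rightarrow> 'a"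
  assumes "m mod 4 = 1" and "m \<ge> 5"
    and "card (UNIV :: 'f set) = 3" and "card (UNIV :: 'a set) = 3 ^ m"
    and "ring_hom_fun \<phi>"
    and "primitive_elem \<alpha>"
  shows "let n = 3 ^ m - 1;
             C03 = cyclic_code n (gen_poly \<phi> \<alpha> 0 3 m);
             C12 = cyclic_code n (gen_poly \<phi> \<alpha> 1 2 m);
             C23 = cyclic_code n (gen_poly \<phi> \<alpha> 2 3 m);
             C01 = cyclic_code n (gen_poly \<phi> \<alpha> 0 1 m)
         in ((\<forall>c\<in>C03. degree c < n) \<and> code_dim C03 = (n + 2) div 2 \<and>
             (\<forall>c\<in>C12. degree c < n) \<and> code_dim C12 = n div 2) \<and>
            ((\<forall>c\<in>C23. degree c < n) \<and> code_dim C23 = (n + 2) div 2 \<and>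
             (\<forall>c\<in>C01. degree c < n) \<and> code_dim C01 = n div 2)"
proof -
  have "odd m" and "m > 0" using assms(1) by presburger+
  note code = cyclic_code_gen_poly[OF assms(4) \<open>m > 0\<close> assms(5,6)]
  note count = weight_count_mod_4_eq_1[OF assms(1)]
  note card_T = card_T_set[OF \<open>odd m\<close>]
  define n :: nat where "n = 3 ^ m - 1"
  have "n - card (T_set 0 3 m) = (n + 2) div 2" and "n - card (T_set 1 2 m) = n div 2"
    and "n - card (T_set 2 3 m) = (n + 2) div 2" and "n - card (T_set 0 1 m) = n div 2"
    using card_T[of 0 3] card_T[of 1 2] card_T[of 2 3] card_T[of 0 1] count
    by (simp_all add: n_def)
  then show ?thesis unfolding Let_def n_def[symmetric] using code[folded n_def] by simp
qed

end
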